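(* The following two statements are equivalent. (i) For every amphicheiral knot $K$ with Conway polynomial $C(z)=C_K(z)$, there is a polynomial $F\in\mathbb Z_4[z^2]$ such that $F^2=C(z)\,C(z^2)\,C(iz)$ in $\mathbb Z_4[z^2]$. (ii) For every amphicheiral knot $K$ with normalized Alexander polynomial $A(t)=A_K(t)$, the Laurent polynomial $A(t)\,A(-t)\,A(t^2)$ is a square in the ring $\mathbb Z_4[t,t^{-1}]$.
   Context: A knot is amphicheiral if it is isotopic to its mirror image, disregarding string orientation. The Conway polynomial $C(z)$ of a knot lies in $1+z^2\mathbb Z[z^2]$; hence $C(iz)$ and $C(z^2)$ are again integer polynomials in $z^2$, and the product $C(z)C(z^2)C(iz)$ is reduced modulo $4$ to give an element of $\mathbb Z_4[z^2]$. The Alexander polynomial $A(t)$ is normalized so that $A(t)=A(t^{-1})$ and $A(1)=1$; it is related to the Conway polynomial by $A(t)=C(t^{1/2}-t^{-1/2})$. *)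

theory Defs
  imports "HOL-Computational_Algebra.Polynomial" "HOL-Library.Numeral_Type" "HOL-Library.Poly_Mapping"
begin

definition conway_type :: "int poly \<Rightarrow> bool" where
  "conway_type C \<longleftrightarrow> coeff C 0 = 1 \<and> (\<forall>n. odd n \<longrightarrow> coeff C n = 0)"

text \<open>For C in Z[z^2], C(s) = sum_j c_(2j) (s^2)^j only depends on w = s^2.
  conway_eval C w is the value C(s) for any s with s^2 = w, computed in an
  arbitrary commutative ring (integer coefficients reduced via of_int).\<close>
definition conway_eval :: "int poly \<Rightarrow> 'a::comm_ring_1 \<Rightarrow> 'a" where
  "conway_eval C w = (\<Sum>j\<le>degree C. of_int (coeff C (2 * j)) * w ^ j)"

definition even_poly :: "'a::zero poly \<Rightarrow> bool" where
  "even_poly p \<longleftrightarrow> (\<forall>n. odd n \<longrightarrow> coeff p n = 0)"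

text \<open>The ring Z_4[t,t^-1] of Laurent polynomials = group ring of Z over Z_4.\<close>
type_synonym laurent4 = "int \<Rightarrow>\<^sub>0 4"

definition lt :: laurent4 where "lt = Poly_Mapping.single 1 1"
definition lt_inv :: laurent4 where "lt_inv = Poly_Mapping.single (-1) 1"

text \<open>Alexander polynomial A(s) = C(s^(1/2) - s^(-1/2)), where s is a unit with
  inverse sinv; note (s^(1/2) - s^(-1/2))^2 = s - 2 + s^(-1).\<close>
definition alexander_eval :: "int poly \<Rightarrow> laurent4 \<Rightarrow> laurent4 \<Rightarrow> laurent4" where
  "alexander_eval C s sinv = conway_eval C (s - 2 + sinv)"

end

theory Submission
  imports Defs
begin

text \<open>
  Put h = C(x) C(x^2) C(-x) in Z/4[x], so that the product in (i)
  is h(z^2). An even polynomial is a polynomial in z^2, hence (i) says that h is a square in Z/4[x].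
  The product in (ii) is the image of h under the ring map Z/4[x] -> Z/4[t, t^-1] sending x to
  u = t - 2 + t^-1, because -t - 2 - t^-1 = -u and t^2 - 2 + t^-2 = u^2 modulo 4. This map is
  injective, and Z/4[t, t^-1] is free over its image with basis 1, t, as t^2 = (u + 2) t - 1.
  Writing a square root of the image of h as a + b t gives h = a^2 - b^2 and
  2ab + (x + 2) b^2 = 0. Doubling the latter leaves 2 x b^2 = 0, so b has even coefficients,
  b^2 = 0 and h = a^2.
\<close>

section \<open>Arithmetic in Z/4 and Z/4[x]\<close>

lemma cases_4 [case_names 0 1 2 3]:
  fixes x :: 4
  obtains "x = 0" | "x = 1" | "x = 2" | "x = 3"
proof (induction x rule: bit0.induct)
  case (1 z)
  then have "z = 0 \<or> z = 1 \<or> z = 2 \<or> z = 3" by auto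
  then show ?case using 1 by auto
qed

lemma double_eq_0_imp_mult_eq_0:
  fixes c d :: 4
  assumes "2 * c = 0" and "2 * d = 0"
  shows "c * d = 0"
  using assms by (cases c rule: cases_4; cases d rule: cases_4) auto

lemma double_square_eq_0_imp_double_eq_0:
  fixes c :: 4
  assumes "2 * c\<^sup>2 = 0"
  shows "2 * c = 0"
  using assms by (cases c rule: cases_4) (auto simp: power2_eq_square)

lemma poly_double_eq_0_imp_square_eq_0:
  fixes b :: "4 poly"
  assumes "2 * b = 0"
  shows "b\<^sup>2 = 0"
proof (rule poly_eqI)
  have "2 * coeff b i = 0" for i
    using arg_cong[OF assms, of "\<lambda>p. coeff p i"] by (simp add: numeral_poly)
  then show "coeff (b\<^sup>2) n = coeff 0 n" for n
    by (simp add: power2_eq_square coeff_mult double_eq_0_imp_mult_eq_0)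
qed

lemma poly_double_square_eq_0_imp_double_eq_0:
  fixes b :: "4 poly"
  assumes "2 * b\<^sup>2 = 0"
  shows "2 * b = 0"
  using assms
proof (induction b)
  case 0
  then show ?case by simp
next
  case (pCons c b)
  have four: "(4::4) = 0" by simp
  have "2 * (pCons c b)\<^sup>2 = pCons (2 * c\<^sup>2) (pCons 0 (2 * b\<^sup>2))"
    by (simp add: four power2_eq_square algebra_simps numeral_poly)
  with pCons.prems have "2 * c\<^sup>2 = 0" and "2 * b\<^sup>2 = 0" by simp_all
  then have "2 * c = 0" and "2 * b = 0"
    using pCons.IH double_square_eq_0_imp_double_eq_0 by simp_all
  then show ?case by (simp add: numeral_poly mult.commute)
qed

lemma cross_term_eq_0_imp_square_eq_0:
  fixes a b :: "4 poly"
  assumes "2 * a * b + ([:0, 1:] + 2) * b\<^sup>2 = 0"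
  shows "b\<^sup>2 = 0"
proof -
  have "2 * (2 * a * b + ([:0, 1:] + 2) * b\<^sup>2) = [:0, 1:] * (2 * b\<^sup>2) + 4 * (a * b + b\<^sup>2)"
    by (simp add: algebra_simps)
  moreover have "(4::4 poly) = 0"
    by (simp add: numeral_poly)
  ultimately have "[:0, 1:] * (2 * b\<^sup>2) = 0"
    using assms by (simp only: mult_zero_left mult_zero_right add_0_right)
  then have "2 * b\<^sup>2 = 0"
    by simp
  then show ?thesis
    by (rule poly_double_eq_0_imp_square_eq_0[OF poly_double_square_eq_0_imp_double_eq_0])
qed

section \<open>Even polynomials\<close>

lemma coeff_pcompose_monom:
  fixes p :: "'a::comm_semiring_1 poly"
  assumes "k > 0"
  shows "coeff (pcompose p (monom 1 k)) n = (if k dvd n then coeff p (n div k) else 0)"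
proof (induction p arbitrary: n)
  case 0
  then show ?case by simp
next
  case (pCons a p)
  show ?case
  proof (cases "n < k")
    case True
    then show ?thesis using assms
      by (auto simp: pcompose_pCons coeff_monom_mult coeff_pCons split: nat.split dest: dvd_imp_le)
  next
    case False
    then have "k dvd n \<longleftrightarrow> k dvd n - k" and "n div k = Suc ((n - k) div k)"
      using assms by (auto simp: dvd_minus_self le_div_geq)
    then show ?thesis using False assms pCons.IH[of "n - k"]
      by (simp add: pcompose_pCons coeff_monom_mult coeff_pCons split: nat.split)
  qed
qed

lemma pcompose_power: "pcompose (p ^ n) q = pcompose p q ^ n"
  by (induction n) (simp_all add: pcompose_mult pcompose_1)

lemma even_poly_pcompose_monom2:
  fixes p :: "'a::comm_semiring_1 poly"
  shows "even_poly (pcompose p (monom 1 2))"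
  by (auto simp: even_poly_def coeff_pcompose_monom)

lemma pcompose_monom_eq_iff:
  fixes p q :: "'a::comm_semiring_1 poly"
  assumes "k > 0"
  shows "pcompose p (monom 1 k) = pcompose q (monom 1 k) \<longleftrightarrow> p = q"
proof
  assume eq: "pcompose p (monom 1 k) = pcompose q (monom 1 k)"
  show "p = q"
  proof (rule poly_eqI)
    show "coeff p n = coeff q n" for n
      using arg_cong[OF eq, of "\<lambda>r. coeff r (k * n)"] assms
      by (simp add: coeff_pcompose_monom)
  qed
qed simp

lemma even_poly_imp_pcompose_monom2:
  fixes F :: "'a::comm_semiring_1 poly"
  assumes "even_poly F"
  obtains f where "F = pcompose f (monom 1 2)"
proof
  define f where "f = Abs_poly (\<lambda>n. coeff F (2 * n))"
  have "coeff f = (\<lambda>n. coeff F (2 * n))"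
    unfolding f_def by (rule coeff_Abs_poly[of "degree F"]) (simp add: coeff_eq_0)
  with assms show "F = pcompose f (monom 1 2)"
    by (intro poly_eqI) (auto simp: coeff_pcompose_monom even_poly_def)
qed

lemma even_square_root_iff:
  fixes h :: "'a::comm_semiring_1 poly"
  shows "(\<exists>F. even_poly F \<and> F\<^sup>2 = pcompose h (monom 1 2)) \<longleftrightarrow> (\<exists>f. f\<^sup>2 = h)"
proof
  assume "\<exists>F. even_poly F \<and> F\<^sup>2 = pcompose h (monom 1 2)"
  then obtain F where "even_poly F" and F: "F\<^sup>2 = pcompose h (monom 1 2)" by blast
  from \<open>even_poly F\<close> obtain f where "F = pcompose f (monom 1 2)"
    by (rule even_poly_imp_pcompose_monom2)
  with F have "pcompose (f\<^sup>2) (monom 1 2) = pcompose h (monom 1 2)" by (simp flip: pcompose_power)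
  then show "\<exists>f. f\<^sup>2 = h" by (auto simp: pcompose_monom_eq_iff)
next
  assume "\<exists>f. f\<^sup>2 = h"
  then obtain f where "f\<^sup>2 = h" by blast
  then have "(pcompose f (monom 1 2))\<^sup>2 = pcompose h (monom 1 2)" by (simp flip: pcompose_power)
  then show "\<exists>F. even_poly F \<and> F\<^sup>2 = pcompose h (monom 1 2)"
    using even_poly_pcompose_monom2 by blast
qed

lemma conway_eval_pcompose: "conway_eval C (pcompose p q) = pcompose (conway_eval C p) q"
  by (simp add: conway_eval_def pcompose_sum pcompose_mult pcompose_power pcompose_smult of_int_poly)

section \<open>Z/4[t, t^-1] as a free module over Z/4[t + t^-1]\<close>

definition laurent_const :: "4 \<Rightarrow> laurent4" where
  "laurent_const a = Poly_Mapping.single 0 a"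

text \<open>zsq is (t^(1/2) - t^(-1/2))^2, and eval_zsq substitutes it for x = z^2.\<close>

definition zsq :: laurent4 where
  "zsq = lt - 2 + lt_inv"

definition eval_zsq :: "4 poly \<Rightarrow> laurent4" where
  "eval_zsq p = poly (map_poly laurent_const p) zsq"

lemma laurent_const_0 [simp]: "laurent_const 0 = 0"
  by (simp add: laurent_const_def)

lemma eval_zsq_0 [simp]: "eval_zsq 0 = 0"
  by (simp add: eval_zsq_def)

lemma eval_zsq_pCons: "eval_zsq (pCons a p) = laurent_const a + zsq * eval_zsq p"
  by (simp add: eval_zsq_def map_poly_pCons)

lemma eval_zsq_const: "eval_zsq [:a:] = laurent_const a"
  by (simp add: eval_zsq_pCons)

lemma eval_zsq_add: "eval_zsq (p + q) = eval_zsq p + eval_zsq q"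
proof (induction p q rule: poly_induct2)
  case (pCons a p b q)
  then show ?case
    by (simp add: eval_zsq_pCons laurent_const_def single_add algebra_simps)
qed simp

lemma eval_zsq_smult: "eval_zsq (smult a p) = laurent_const a * eval_zsq p"
  by (induction p) (simp_all add: eval_zsq_pCons laurent_const_def mult_single algebra_simps)

lemma eval_zsq_mult: "eval_zsq (p * q) = eval_zsq p * eval_zsq q"
  by (induction p) (simp_all add: eval_zsq_pCons eval_zsq_add eval_zsq_smult algebra_simps)

lemma eval_zsq_minus: "eval_zsq (- p) = - eval_zsq p"
  using eval_zsq_add[of p "- p"] by (simp add: add_eq_0_iff2)

lemma eval_zsq_diff: "eval_zsq (p - q) = eval_zsq p - eval_zsq q"
  using eval_zsq_add[of p "- q"] by (simp add: eval_zsq_minus)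

lemma eval_zsq_of_int: "eval_zsq (of_int k) = of_int k"
  by (simp add: of_int_poly eval_zsq_const laurent_const_def)

lemma eval_zsq_1: "eval_zsq 1 = 1"
  using eval_zsq_of_int[of 1] by simp

lemma eval_zsq_2: "eval_zsq 2 = 2"
  using eval_zsq_of_int[of 2] by simp

lemma eval_zsq_power: "eval_zsq (p ^ n) = eval_zsq p ^ n"
  by (induction n) (simp_all add: eval_zsq_1 eval_zsq_mult)

lemma eval_zsq_sum: "eval_zsq (sum f A) = (\<Sum>i\<in>A. eval_zsq (f i))"
  by (induction A rule: infinite_finite_induct) (simp_all add: eval_zsq_add)

lemma eval_zsq_X: "eval_zsq [:0, 1:] = zsq"
  by (simp add: eval_zsq_pCons laurent_const_def)

lemma eval_zsq_conway_eval: "eval_zsq (conway_eval C p) = conway_eval C (eval_zsq p)"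
  by (simp add: conway_eval_def eval_zsq_sum eval_zsq_mult eval_zsq_power eval_zsq_of_int)

lemma four_laurent4_eq_0: "(4::laurent4) = 0"
proof -
  have "(4::4) = 0" by simp
  then show ?thesis by (metis single_numeral single_zero)
qed

lemma lt_mult_lt_inv: "lt * lt_inv = 1"
  by (simp add: lt_def lt_inv_def mult_single)

lemma lt_squared: "lt\<^sup>2 = (zsq + 2) * lt - 1"
  using lt_mult_lt_inv by (simp add: zsq_def power2_eq_square algebra_simps)

lemma lookup_mult_single:
  fixes p :: "'k::ab_group_add \<Rightarrow>\<^sub>0 'a::semiring_0"
  shows "Poly_Mapping.lookup (p * Poly_Mapping.single j c) k = Poly_Mapping.lookup p (k - j) * c"
proof -
  have "Sum_any (\<lambda>q. (c when j = q) when k = l + q) = (c when l = k - j)" for l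
  proof -
    have "Sum_any (\<lambda>q. (c when j = q) when k = l + q) = Sum_any (\<lambda>q. (c when k = l + j) when j = q)"
      by (rule Sum_any.cong) (auto simp: when_def)
    also have "\<dots> = (c when l = k - j)"
      by (auto simp: when_def)
    finally show ?thesis .
  qed
  then show ?thesis
    by (simp add: lookup_mult lookup_single mult_when)
qed

lemma lookup_mult_lt: "Poly_Mapping.lookup (p * lt) k = Poly_Mapping.lookup p (k - 1)"
  by (simp add: lt_def lookup_mult_single)

lemma lookup_zsq_mult:
  "Poly_Mapping.lookup (zsq * p) k =
     Poly_Mapping.lookup p (k - 1) - 2 * Poly_Mapping.lookup p k + Poly_Mapping.lookup p (k + 1)"
proof -
  have "zsq * p = p * Poly_Mapping.single 1 1 - p * Poly_Mapping.single 0 2 + p * Poly_Mapping.single (-1) 1"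
    by (simp add: zsq_def lt_def lt_inv_def algebra_simps)
  then show ?thesis
    by (simp add: lookup_mult_single lookup_add lookup_minus del: single_numeral)
qed

lemma lookup_eval_zsq_outside:
  assumes "int (degree p) \<le> \<bar>k\<bar>"
  shows "Poly_Mapping.lookup (eval_zsq p) k = (if \<bar>k\<bar> = int (degree p) then lead_coeff p else 0)"
  using assms
proof (induction p arbitrary: k)
  case 0
  then show ?case by simp
next
  case (pCons a p)
  show ?case
  proof (cases "p = 0")
    case True
    then show ?thesis
      by (simp add: eval_zsq_pCons laurent_const_def lookup_single when_def)
  next
    case False
    with pCons.prems have "k \<noteq> 0" and "int (degree p) + 1 \<le> \<bar>k\<bar>" by auto
    with False pCons.IH show ?thesis
      by (auto simp: eval_zsq_pCons lookup_add lookup_zsq_mult laurent_const_def lookup_single)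
  qed
qed

lemma lookup_eval_zsq_nonzero_imp_abs_le:
  assumes "Poly_Mapping.lookup (eval_zsq p) k \<noteq> 0"
  shows "\<bar>k\<bar> \<le> int (degree p)"
  using assms lookup_eval_zsq_outside[of p k] by (cases "\<bar>k\<bar> \<le> int (degree p)") auto

lemma lookup_eval_zsq_degree:
  "Poly_Mapping.lookup (eval_zsq p) (int (degree p)) = lead_coeff p"
  "Poly_Mapping.lookup (eval_zsq p) (- int (degree p)) = lead_coeff p"
  by (simp_all add: lookup_eval_zsq_outside)

text \<open>
  eval_zsq a lives in degrees -deg a .. deg a with lead_coeff a at both ends, while
  eval_zsq b * lt lives in degrees 1 - deg b .. deg b + 1: the two cannot cancel.
\<close>

lemma eval_zsq_lt_independent:
  assumes "eval_zsq a + eval_zsq b * lt = 0"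
  shows "a = 0 \<and> b = 0"
proof -
  let ?A = "Poly_Mapping.lookup (eval_zsq a)" and ?B = "Poly_Mapping.lookup (eval_zsq b)"
  let ?m = "int (degree a)" and ?n = "int (degree b)"
  have AB: "?B (k - 1) = - ?A k" for k
    using arg_cong[OF assms, of "\<lambda>G. Poly_Mapping.lookup G k"]
    by (simp add: lookup_add lookup_mult_lt eq_neg_iff_add_eq_0 add.commute)
  have a_bottom: "b \<noteq> 0 \<and> ?m + 1 \<le> ?n" if "a \<noteq> 0"
  proof -
    have "?B (- ?m - 1) \<noteq> 0"
      using AB[of "- ?m"] that by (simp add: lookup_eval_zsq_degree)
    then show ?thesis
      using lookup_eval_zsq_nonzero_imp_abs_le[of b "- ?m - 1"] by (cases "b = 0") auto
  qed
  have b_top: "a \<noteq> 0 \<and> ?n + 1 \<le> ?m" if "b \<noteq> 0"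
  proof -
    have "?A (?n + 1) = - lead_coeff b"
      using AB[of "?n + 1"] by (simp add: lookup_eval_zsq_degree)
    with that have "?A (?n + 1) \<noteq> 0" by simp
    then show ?thesis
      using lookup_eval_zsq_nonzero_imp_abs_le[of a "?n + 1"] by (cases "a = 0") auto
  qed
  have "a = 0"
  proof (rule ccontr)
    assume "a \<noteq> 0"
    with a_bottom have "b \<noteq> 0" and "?m + 1 \<le> ?n" by blast+
    with b_top show False by fastforce
  qed
  with b_top show ?thesis by blast
qed

definition zsq_lt_span :: "laurent4 set" where
  "zsq_lt_span = {eval_zsq a + eval_zsq b * lt | a b. True}"

lemma zsq_lt_span_add:
  assumes "G \<in> zsq_lt_span" and "H \<in> zsq_lt_span"
  shows "G + H \<in> zsq_lt_span"
proof -
  obtain a b a' b' where "G = eval_zsq a + eval_zsq b * lt" and "H = eval_zsq a' + eval_zsq b' * lt"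
    using assms by (auto simp: zsq_lt_span_def)
  then have "G + H = eval_zsq (a + a') + eval_zsq (b + b') * lt"
    by (simp add: eval_zsq_add algebra_simps)
  then show ?thesis by (auto simp: zsq_lt_span_def)
qed

lemma lt_inv_eq: "lt_inv = zsq + 2 - lt"
  by (simp add: zsq_def)

lemma zsq_lt_span_mult_lt:
  assumes "G \<in> zsq_lt_span"
  shows "G * lt \<in> zsq_lt_span"
proof -
  obtain a b where G: "G = eval_zsq a + eval_zsq b * lt"
    using assms by (auto simp: zsq_lt_span_def)
  have "G * lt = eval_zsq a * lt + eval_zsq b * lt\<^sup>2"
    by (simp add: G power2_eq_square algebra_simps)
  also have "\<dots> = eval_zsq (- b) + eval_zsq (a + ([:0, 1:] + 2) * b) * lt"
    by (simp only: lt_squared eval_zsq_add eval_zsq_mult eval_zsq_minus eval_zsq_X eval_zsq_2)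
      (simp add: algebra_simps)
  finally show ?thesis unfolding zsq_lt_span_def by blast
qed

lemma zsq_lt_span_mult_lt_inv:
  assumes "G \<in> zsq_lt_span"
  shows "G * lt_inv \<in> zsq_lt_span"
proof -
  obtain a b where G: "G = eval_zsq a + eval_zsq b * lt"
    using assms by (auto simp: zsq_lt_span_def)
  have "G * lt_inv = eval_zsq a * (zsq + 2) - eval_zsq a * lt + eval_zsq b * (zsq + 2) * lt
      - eval_zsq b * lt\<^sup>2"
    unfolding G lt_inv_eq by (simp add: power2_eq_square algebra_simps)
  also have "\<dots> = eval_zsq (([:0, 1:] + 2) * a + b) + eval_zsq (- a) * lt"
    by (simp only: lt_squared eval_zsq_add eval_zsq_mult eval_zsq_minus eval_zsq_X eval_zsq_2)
      (simp add: algebra_simps)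
  finally show ?thesis unfolding zsq_lt_span_def by blast
qed

lemma laurent_const_in_zsq_lt_span: "laurent_const c \<in> zsq_lt_span"
proof -
  have "laurent_const c = eval_zsq [:c:] + eval_zsq 0 * lt"
    by (simp add: eval_zsq_const)
  then show ?thesis unfolding zsq_lt_span_def by blast
qed

lemma single_in_zsq_lt_span: "Poly_Mapping.single k c \<in> zsq_lt_span"
proof -
  have lt: "laurent_const c * lt ^ n \<in> zsq_lt_span" for n
    by (induction n) (simp_all add: laurent_const_in_zsq_lt_span zsq_lt_span_mult_lt power_Suc2
        mult.assoc[symmetric] del: power_Suc)
  have lt_inv: "laurent_const c * lt_inv ^ n \<in> zsq_lt_span" for n
    by (induction n) (simp_all add: laurent_const_in_zsq_lt_span zsq_lt_span_mult_lt_inv power_Suc2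
        mult.assoc[symmetric] del: power_Suc)
  have "lt ^ n = Poly_Mapping.single (int n) 1" and "lt_inv ^ n = Poly_Mapping.single (- int n) 1" for n
    by (induction n) (simp_all add: lt_def lt_inv_def mult_single algebra_simps)
  then show ?thesis
    using lt[of "nat k"] lt_inv[of "nat (- k)"]
    by (cases "k \<ge> 0") (simp_all add: laurent_const_def mult_single)
qed

lemma zsq_lt_span_UNIV: "zsq_lt_span = UNIV"
proof -
  have "G \<in> zsq_lt_span" for G
  proof (induction G rule: update_induct)
    case const
    then show ?case using laurent_const_in_zsq_lt_span[of 0] by simp
  next
    case (update G k c)
    then have "Poly_Mapping.update k c G = G + Poly_Mapping.single k c"
      by (intro poly_mapping_eqI) (auto simp: lookup_update lookup_add lookup_single when_def in_keys_iff)
    with update show ?case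
      by (simp add: zsq_lt_span_add single_in_zsq_lt_span)
  qed
  then show ?thesis by blast
qed

lemma square_eval_zsq_plus_lt:
  "(eval_zsq a + eval_zsq b * lt)\<^sup>2 =
     eval_zsq (a\<^sup>2 - b\<^sup>2) + eval_zsq (2 * a * b + ([:0, 1:] + 2) * b\<^sup>2) * lt"
proof -
  have "(eval_zsq a + eval_zsq b * lt)\<^sup>2 =
      eval_zsq a ^ 2 + 2 * eval_zsq a * eval_zsq b * lt + eval_zsq b ^ 2 * lt\<^sup>2"
    by (simp add: power2_eq_square algebra_simps)
  also have "\<dots> = eval_zsq (a\<^sup>2 - b\<^sup>2) + eval_zsq (2 * a * b + ([:0, 1:] + 2) * b\<^sup>2) * lt"
    by (simp only: lt_squared eval_zsq_add eval_zsq_diff eval_zsq_mult eval_zsq_power eval_zsq_X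
        eval_zsq_2) (simp add: algebra_simps)
  finally show ?thesis .
qed

lemma laurent_square_root_iff: "(\<exists>G :: laurent4. G\<^sup>2 = eval_zsq h) \<longleftrightarrow> (\<exists>f. f\<^sup>2 = h)"
proof
  assume "\<exists>G. G\<^sup>2 = eval_zsq h"
  then obtain G where G: "G\<^sup>2 = eval_zsq h" by blast
  obtain a b where ab: "G = eval_zsq a + eval_zsq b * lt"
    using zsq_lt_span_UNIV unfolding zsq_lt_span_def by blast
  define c where "c = 2 * a * b + ([:0, 1:] + 2) * b\<^sup>2"
  have "G\<^sup>2 = eval_zsq (a\<^sup>2 - b\<^sup>2) + eval_zsq c * lt"
    by (simp only: ab square_eval_zsq_plus_lt c_def)
  with G have "eval_zsq (a\<^sup>2 - b\<^sup>2 - h) + eval_zsq c * lt = 0"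
    by (simp add: eval_zsq_diff eval_zsq_add algebra_simps)
  then have "a\<^sup>2 - b\<^sup>2 - h = 0" and "c = 0"
    using eval_zsq_lt_independent by blast+
  moreover from \<open>c = 0\<close> have "b\<^sup>2 = 0"
    unfolding c_def by (rule cross_term_eq_0_imp_square_eq_0)
  ultimately have "a\<^sup>2 = h"
    by simp
  then show "\<exists>f. f\<^sup>2 = h" by auto
next
  assume "\<exists>f. f\<^sup>2 = h"
  then show "\<exists>G :: laurent4. G\<^sup>2 = eval_zsq h"
    by (auto simp: eval_zsq_power)
qed

section \<open>The Conway and Alexander products\<close>

text \<open>The polynomial h(x) with C(z) C(z^2) C(iz) = h(z^2).\<close>

definition conway_product :: "int poly \<Rightarrow> 4 poly" where
  "conway_product C = conway_eval C [:0, 1:] * conway_eval C ([:0, 1:]\<^sup>2) * conway_eval C (- [:0, 1:])"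

lemma conway_product_pcompose:
  "conway_eval C (monom 1 2) * conway_eval C (monom 1 4) * conway_eval C (- monom 1 2) =
     pcompose (conway_product C) (monom 1 2)"
proof -
  have "pcompose [:0, 1:] (monom 1 2) = (monom 1 2 :: 4 poly)"
    by (simp add: pcompose_pCons)
  moreover have "(monom 1 2)\<^sup>2 = (monom 1 4 :: 4 poly)"
    by (simp add: power2_eq_square mult_monom)
  ultimately show ?thesis
    unfolding conway_product_def pcompose_mult conway_eval_pcompose[symmetric] pcompose_uminus
      pcompose_power by simp
qed

lemma conway_product_eval_zsq:
  "alexander_eval C lt lt_inv * alexander_eval C (- lt) (- lt_inv) * alexander_eval C (lt ^ 2) (lt_inv ^ 2) =
     eval_zsq (conway_product C)"
proof -
  have "- lt - 2 + - lt_inv = - zsq - 4"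
    by (simp add: zsq_def algebra_simps)
  then have minus: "- lt - 2 + - lt_inv = - zsq"
    by (simp add: four_laurent4_eq_0)
  have "lt\<^sup>2 - 2 + lt_inv\<^sup>2 = zsq\<^sup>2 - 2 * (lt * lt_inv - 1) - 4 * (2 - lt - lt_inv)"
    by (simp add: zsq_def power2_eq_square algebra_simps)
  then have square: "lt\<^sup>2 - 2 + lt_inv\<^sup>2 = zsq\<^sup>2"
    by (simp add: four_laurent4_eq_0 lt_mult_lt_inv)
  have "eval_zsq (conway_product C) = conway_eval C zsq * conway_eval C (zsq\<^sup>2) * conway_eval C (- zsq)"
    unfolding conway_product_def
    by (simp only: eval_zsq_mult eval_zsq_conway_eval eval_zsq_X eval_zsq_power eval_zsq_minus)
  then show ?thesis
    unfolding alexander_eval_def zsq_def[symmetric] minus square by (simp add: mult_ac)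
qed

theorem proposition1p2:
  fixes amphicheiral :: "'k \<Rightarrow> bool" and conway :: "'k \<Rightarrow> int poly"
  assumes "\<forall>K. conway_type (conway K)"
  shows "(\<forall>K. amphicheiral K \<longrightarrow>
            (\<exists>F :: 4 poly. even_poly F \<and>
               F ^ 2 = conway_eval (conway K) (monom 1 2)
                     * conway_eval (conway K) (monom 1 4)
                     * conway_eval (conway K) (- monom 1 2)))
     \<longleftrightarrow>
         (\<forall>K. amphicheiral K \<longrightarrow>
            (\<exists>G :: laurent4.
               G ^ 2 = alexander_eval (conway K) lt lt_inv
                     * alexander_eval (conway K) (- lt) (- lt_inv)
                     * alexander_eval (conway K) (lt ^ 2) (lt_inv ^ 2)))"
  unfolding conway_product_pcompose conway_product_eval_zsq even_square_root_iff laurent_square_root_iff ..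

end
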